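(* Let $n\ge4$ be even, $p\ge n+1$ an integer, $c_1$ a positive integer, $a_k=pc_k$, $c_{k+1}=p^2c_k$, and let $T$, $I^{(j)}$, $I^{(j)}_i$ and $\lambda_1$ be as in the context. Then for every $j\ge1$: (1) $\dfrac{\lambda_1(I^{(j)}_1\cup I^{(j)}_n)}{\lambda_1(I^{(j)})}>\dfrac12$; (2) $\dfrac{\lambda_1\bigl(\bigcup_{i=2}^{n-1}I^{(j)}_i\bigr)}{\lambda_1(I^{(j)})}<\dfrac{n}{c_j}$.
   Context: $\pi$ is the permutation of $\{1,\dots,n\}$ with top row $1,2,\dots,n$ and bottom row $n,3,2,5,4,\dots,n-1,n-2,1$. Right Rauzy induction: step "0" when the rightmost domain (top) interval is longer, "1" when the rightmost image (bottom) interval is longer. For $a,c>0$, $\dot\gamma_{m,a}=1^{n-1-m}0^a10^2$, $\gamma_{a,c}=0\,\dot\gamma_{n-2,a}\cdots\dot\gamma_{2,a}\,1^{c(n-1)}$; its transition matrix $\Theta_{a,c}$ (old lengths $=\Theta_{a,c}\cdot$new lengths) has row $1=(1,c,\dots,c)$, row $n=(1,c+1,\dots,c+1)$, and for $1\le i\le(n-2)/2$: row $2i$ has $0$ in column 1, $2$ in columns $2i,2i+1$, $1$ in the other columns among $2,\dots,n$; row $2i+1$ has $a$ in column $2i$, $a+1$ in column $2i+1$, $0$ elsewhere. $\Theta_k=\Theta_{a_k,c_k}$. $T$ is an IET of $[0,1)$ with permutation $\pi$ whose right Rauzy induction path is $\gamma_{a_1,c_1}\gamma_{a_2,c_2}\cdots$;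 $I^{(j)}$ is the interval on which the induced map lives after the first $j$ blocks and $I^{(j)}_1,\dots,I^{(j)}_n$ its exchanged subintervals; lengths satisfy $\ell^{(j-1)}=\Theta_j\ell^{(j)}$. For $v\ge0$, $|v|$ is the sum of entries and $\overline v=v/|v|$. $\lambda_1$ denotes the $T$-invariant Borel probability measure such that for every $j\ge0$, $(\lambda_1(I^{(j)}_i))_i$ is a positive multiple of $\lim_{m\to\infty}\overline{\Theta_{j+1}\cdots\Theta_me_1}$. *)

theory Defs
  imports "HOL-Probability.Probability"
begin

text \<open>Square matrices of size n are represented as functions nat => nat => real,
  with indices ranging over 1..n (row, column).  Vectors are nat => real on 1..n.\<close>

definition Theta :: "nat \<Rightarrow> nat \<Rightarrow> nat \<Rightarrow> nat \<Rightarrow> nat \<Rightarrow> real" where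
  "Theta n a c r k =
     (if r = 1 then (if k = 1 then 1 else real c)
      else if r = n then (if k = 1 then 1 else real c + 1)
      else if even r then
        (if k = 1 then 0 else if k = r \<or> k = r + 1 then 2 else 1)
      else
        (if k = r - 1 then real a else if k = r then real a + 1 else 0))"

definition matmul :: "nat \<Rightarrow> (nat \<Rightarrow> nat \<Rightarrow> real) \<Rightarrow> (nat \<Rightarrow> nat \<Rightarrow> real) \<Rightarrow> nat \<Rightarrow> nat \<Rightarrow> real" where
  "matmul n A B r k = (\<Sum>l = 1..n. A r l * B l k)"

definition idmat :: "nat \<Rightarrow> nat \<Rightarrow> real" where
  "idmat r k = (if r = k then 1 else 0)"

fun thetaProd :: "nat \<Rightarrow> (nat \<Rightarrow> nat) \<Rightarrow> (nat \<Rightarrow> nat) \<Rightarrow> nat \<Rightarrow> nat \<Rightarrow> nat \<Rightarrow> nat \<Rightarrow> real" where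
  "thetaProd n a c j 0 = idmat"
| "thetaProd n a c j (Suc m) =
     (if Suc m \<le> j then idmat
      else matmul n (thetaProd n a c j m) (Theta n (a (Suc m)) (c (Suc m))))"

definition normProdE1 :: "nat \<Rightarrow> (nat \<Rightarrow> nat) \<Rightarrow> (nat \<Rightarrow> nat) \<Rightarrow> nat \<Rightarrow> nat \<Rightarrow> nat \<Rightarrow> real" where
  "normProdE1 n a c j m i =
     thetaProd n a c j m i 1 / (\<Sum>k = 1..n. thetaProd n a c j m k 1)"

end

(* The vectors Theta_{j+1} ... Theta_m e_1 (m >= j) all lie in the cone of nonnegative vectors x
   with x_1 + x_n > 0 and c_{j+1} (x_2 + ... + x_{n-1}) <= (n - 2) x_n.  This follows by backward
   induction on j: for n = 2h + 2 and a = p c, the middle entries of Theta_{a,c} x add up to at most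
   h (x_2 + ... + x_n) + (a + 2) (x_2 + ... + x_{n-1}), while its last entry is
   x_1 + (c + 1) (x_2 + ... + x_n), so Theta_{a,c} maps the cone for p^2 c into the cone for c.
   Normalising and passing to the limit, the middle intervals carry at most the fraction
   (n - 2) / (p^2 c_j) of lambda_1(I^(j)), which is below both 1/2 and n / c_j. *)

theory Submission
  imports Defs
begin

lemma thetaProd_trivial: "m \<le> j \<Longrightarrow> thetaProd n a c j m = idmat"
  by (cases m) auto

lemma matmul_idmat_left: "r \<in> {1..n} \<Longrightarrow> matmul n idmat B r k = B r k"
  by (simp add: matmul_def idmat_def if_distrib if_distribR sum.delta cong: if_cong)

lemma matmul_idmat_right: "k \<in> {1..n} \<Longrightarrow> matmul n A idmat r k = A r k"
  by (simp add: matmul_def idmat_def if_distrib if_distribR sum.delta' cong: if_cong)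

lemma matmul_assoc: "matmul n (matmul n A B) C = matmul n A (matmul n B C)"
  unfolding matmul_def
  by (intro ext) (simp add: sum_distrib_left sum_distrib_right mult.assoc, rule sum.swap)

lemma matmul_cong_left:
  "(\<And>l. l \<in> {1..n} \<Longrightarrow> A r l = A' r l) \<Longrightarrow> matmul n A B r k = matmul n A' B r k"
  by (simp add: matmul_def)

lemma thetaProd_Suc_left:
  assumes "j < m" "r \<in> {1..n}" "k \<in> {1..n}"
  shows "thetaProd n a c j m r k = matmul n (Theta n (a (Suc j)) (c (Suc j))) (thetaProd n a c (Suc j) m) r k"
  using assms(1,3)
proof (induction m arbitrary: k)
  case 0
  then show ?case by simp
next
  case (Suc m)
  show ?case
  proof (cases "m = j")
    case True
    then show ?thesis
      using assms(2) Suc.prems(2) by (simp add: thetaProd_trivial matmul_idmat_left matmul_idmat_right)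
  next
    case False
    then have "j < m" using Suc.prems(1) by simp
    then have "thetaProd n a c j (Suc m) r k
        = matmul n (matmul n (Theta n (a (Suc j)) (c (Suc j))) (thetaProd n a c (Suc j) m))
            (Theta n (a (Suc m)) (c (Suc m))) r k"
      using Suc.IH by (auto intro: matmul_cong_left)
    then show ?thesis using \<open>j < m\<close> by (simp add: matmul_assoc)
  qed
qed

definition mat_vec :: "nat \<Rightarrow> (nat \<Rightarrow> nat \<Rightarrow> real) \<Rightarrow> (nat \<Rightarrow> real) \<Rightarrow> nat \<Rightarrow> real" where
  "mat_vec n A x r = (\<Sum>l = 1..n. A r l * x l)"

lemma sum_split_first: "1 \<le> (n::nat) \<Longrightarrow> (\<Sum>l = 1..n. f l) = f 1 + (\<Sum>l = 2..n. f l)"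
  by (simp add: sum.atLeast_Suc_atMost numeral_2_eq_2)

lemma sum_split_last: "2 \<le> (n::nat) \<Longrightarrow> (\<Sum>l = 2..n. f l) = (\<Sum>l = 2..n - 1. f l) + f n"
  by (cases n) (auto simp: sum.cl_ivl_Suc)

lemma sum_pairs:
  fixes f :: "nat \<Rightarrow> 'a :: comm_monoid_add"
  shows "(\<Sum>r = 2..2 * h + 1. f r) = (\<Sum>i = 1..h. f (2 * i) + f (2 * i + 1))"
proof (induction h)
  case 0
  then show ?case by simp
next
  case (Suc h)
  have "(\<Sum>r = 2..2 * Suc h + 1. f r) = (\<Sum>r = 2..2 * h + 1. f r) + f (2 * h + 2) + f (2 * h + 3)"
    by (simp add: sum.cl_ivl_Suc numeral_eq_Suc)
  then show ?case using Suc by (simp add: algebra_simps)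
qed

lemma mat_vec_Theta_nonneg: "\<forall>l\<in>{1..n}. 0 \<le> x l \<Longrightarrow> 0 \<le> mat_vec n (Theta n a c) x r"
  unfolding mat_vec_def by (intro sum_nonneg mult_nonneg_nonneg) (auto simp: Theta_def)

lemma mat_vec_Theta_first:
  "2 \<le> n \<Longrightarrow> mat_vec n (Theta n a c) x 1 = x 1 + real c * (\<Sum>l = 2..n. x l)"
  unfolding mat_vec_def by (subst sum_split_first) (auto simp: Theta_def sum_distrib_left)

lemma mat_vec_Theta_last:
  "2 \<le> n \<Longrightarrow> mat_vec n (Theta n a c) x n = x 1 + (real c + 1) * (\<Sum>l = 2..n. x l)"
  unfolding mat_vec_def by (subst sum_split_first) (auto simp: Theta_def sum_distrib_left)

lemma mat_vec_Theta_even: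
  assumes "1 \<le> i" "2 * i < n"
  shows "mat_vec n (Theta n a c) x (2 * i) = (\<Sum>l = 2..n. x l) + x (2 * i) + x (2 * i + 1)"
proof -
  have "mat_vec n (Theta n a c) x (2 * i)
      = (\<Sum>l = 2..n. x l + (if l = 2 * i then x l else 0) + (if l = 2 * i + 1 then x l else 0))"
    using assms unfolding mat_vec_def
    by (subst sum_split_first) (auto simp: Theta_def intro!: sum.cong)
  then show ?thesis
    using assms by (simp add: sum.distrib)
qed

lemma mat_vec_Theta_odd:
  assumes "even n" "1 \<le> i" "2 * i < n"
  shows "mat_vec n (Theta n a c) x (2 * i + 1) = real a * x (2 * i) + (real a + 1) * x (2 * i + 1)"
proof -
  have "mat_vec n (Theta n a c) x (2 * i + 1)
      = (\<Sum>l = 1..n. (if l = 2 * i then real a * x l else 0) + (if l = 2 * i + 1 then (real a + 1) * x l else 0))"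
    using assms unfolding mat_vec_def by (intro sum.cong) (auto simp: Theta_def)
  then show ?thesis
    using assms by (simp add: sum.distrib)
qed

lemma sum_mat_vec_Theta_middle_le:
  assumes n: "n = 2 * h + 2" and x_nonneg: "\<forall>l\<in>{1..n}. 0 \<le> x l"
  shows "(\<Sum>r = 2..n - 1. mat_vec n (Theta n a c) x r)
           \<le> real h * (\<Sum>l = 2..n. x l) + (real a + 2) * (\<Sum>l = 2..n - 1. x l)"
proof -
  let ?S = "\<Sum>l = 2..n. x l"
  have n1: "n - 1 = 2 * h + 1" using n by simp
  have "(\<Sum>r = 2..n - 1. mat_vec n (Theta n a c) x r)
      = (\<Sum>i = 1..h. ?S + x (2 * i) + x (2 * i + 1) + (real a * x (2 * i) + (real a + 1) * x (2 * i + 1)))"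
    unfolding n1 sum_pairs
  proof (intro sum.cong refl)
    fix i assume "i \<in> {1..h}"
    then show "mat_vec n (Theta n a c) x (2 * i) + mat_vec n (Theta n a c) x (2 * i + 1)
        = ?S + x (2 * i) + x (2 * i + 1) + (real a * x (2 * i) + (real a + 1) * x (2 * i + 1))"
      using n mat_vec_Theta_even[of i n] mat_vec_Theta_odd[of n i] by simp
  qed
  also have "\<dots> \<le> (\<Sum>i = 1..h. ?S + (real a + 2) * (x (2 * i) + x (2 * i + 1)))"
  proof (intro sum_mono)
    fix i assume "i \<in> {1..h}"
    then have "0 \<le> x (2 * i)" "0 \<le> x (2 * i + 1)" using x_nonneg n by auto
    then show "?S + x (2 * i) + x (2 * i + 1) + (real a * x (2 * i) + (real a + 1) * x (2 * i + 1))
        \<le> ?S + (real a + 2) * (x (2 * i) + x (2 * i + 1))"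
      by (simp add: algebra_simps)
  qed
  also have "\<dots> = real h * ?S + (real a + 2) * (\<Sum>l = 2..n - 1. x l)"
    unfolding n1 sum_pairs by (simp add: sum.distrib sum_distrib_left[symmetric])
  finally show ?thesis .
qed

definition middle_cone :: "nat \<Rightarrow> real \<Rightarrow> (nat \<Rightarrow> real) \<Rightarrow> bool" where
  "middle_cone n K x \<longleftrightarrow>
     (\<forall>i\<in>{1..n}. 0 \<le> x i) \<and> 0 < x 1 + x n \<and> K * (\<Sum>i = 2..n - 1. x i) \<le> real (n - 2) * x n"

lemma middle_cone_cong:
  assumes "1 \<le> n" and xy: "\<And>i. i \<in> {1..n} \<Longrightarrow> x i = y i"
  shows "middle_cone n K x = middle_cone n K y"
proof -
  have "(\<Sum>i = 2..n - 1. x i) = (\<Sum>i = 2..n - 1. y i)"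
    using xy by (intro sum.cong) auto
  with assms show ?thesis
    unfolding middle_cone_def by auto
qed

lemma middle_cone_step_arith:
  fixes p C M x1 xn h y :: real
  assumes "2 \<le> p" "0 \<le> C" "0 \<le> M" "0 \<le> x1" "0 \<le> xn" "0 \<le> h"
    and M: "p\<^sup>2 * C * M \<le> 2 * h * xn" and y: "y \<le> h * (M + xn) + (p * C + 2) * M"
  shows "C * y \<le> 2 * h * (x1 + (C + 1) * (M + xn))"
proof -
  have p_large: "2 * (p * C + 2) \<le> p\<^sup>2 * (C + 2)"
  proof -
    have "2 * (p * C) \<le> p * (p * C)" using assms by (intro mult_right_mono) auto
    moreover have "4 \<le> p\<^sup>2" using power_mono[of 2 p 2] assms by simp
    ultimately show ?thesis by (simp add: power2_eq_square algebra_simps)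
  qed
  have "p\<^sup>2 * (C * (p * C + 2) * M) \<le> p\<^sup>2 * (h * (C + 2) * xn)"
  proof -
    have "p\<^sup>2 * (C * (p * C + 2) * M) = (p * C + 2) * (p\<^sup>2 * C * M)"
      by (simp add: algebra_simps)
    also have "\<dots> \<le> (p * C + 2) * (2 * h * xn)"
      using M assms by (intro mult_left_mono) auto
    also have "\<dots> = 2 * (p * C + 2) * (h * xn)"
      by (simp add: algebra_simps)
    also have "\<dots> \<le> p\<^sup>2 * (C + 2) * (h * xn)"
      using p_large assms by (intro mult_right_mono) auto
    finally show ?thesis by (simp add: algebra_simps)
  qed
  then have key: "C * (p * C + 2) * M \<le> h * (C + 2) * xn"
    using assms by simp
  have "C * y \<le> h * C * M + h * C * xn + C * (p * C + 2) * M"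
    using mult_left_mono[OF y \<open>0 \<le> C\<close>] by (simp add: algebra_simps)
  also have "\<dots> \<le> h * C * M + h * C * xn + h * (C + 2) * xn"
    using key by simp
  also have "\<dots> \<le> 2 * h * (x1 + (C + 1) * (M + xn))"
  proof -
    have "0 \<le> 2 * (h * x1) + h * C * M + 2 * (h * M)"
      using assms by simp
    then show ?thesis by (simp add: algebra_simps)
  qed
  finally show ?thesis .
qed

lemma middle_cone_Theta:
  assumes n: "even n" "2 \<le> n" and p: "2 \<le> p"
    and x: "middle_cone n (real p ^ 2 * real C) x"
  shows "middle_cone n (real C) (mat_vec n (Theta n (p * C) C) x)"
proof -
  obtain h where h: "n = 2 * h + 2"
  proof -
    obtain k where "n = 2 * k" using n(1) by (elim evenE)
    then show ?thesis using that[of "k - 1"] n(2) by simp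
  qed
  let ?y = "mat_vec n (Theta n (p * C) C) x"
  let ?S = "\<Sum>l = 2..n. x l"
  let ?M = "\<Sum>l = 2..n - 1. x l"
  have x_nonneg: "\<forall>l\<in>{1..n}. 0 \<le> x l" and x_pos: "0 < x 1 + x n"
    and x_middle: "real p ^ 2 * real C * ?M \<le> real (n - 2) * x n"
    using x by (auto simp: middle_cone_def)
  have x1: "0 \<le> x 1" and xn: "0 \<le> x n" and M: "0 \<le> ?M"
    using x_nonneg n(2) by (auto intro!: sum_nonneg)
  have S: "?S = ?M + x n"
    using n(2) by (rule sum_split_last)
  have y1: "?y 1 = x 1 + real C * ?S" and yn: "?y n = x 1 + (real C + 1) * ?S"
    using mat_vec_Theta_first[OF n(2)] mat_vec_Theta_last[OF n(2)] by simp_all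
  have "\<forall>i\<in>{1..n}. 0 \<le> ?y i"
    using x_nonneg by (simp add: mat_vec_Theta_nonneg)
  moreover have "0 < ?y 1 + ?y n"
  proof -
    have "x 1 + x n \<le> ?y 1 + ?y n"
      using x1 xn M unfolding y1 yn S by (simp add: algebra_simps)
    with x_pos show ?thesis by linarith
  qed
  moreover have "real C * (\<Sum>i = 2..n - 1. ?y i) \<le> real (n - 2) * ?y n"
  proof -
    have "(\<Sum>i = 2..n - 1. ?y i) \<le> real h * (?M + x n) + (real p * real C + 2) * ?M"
      using sum_mat_vec_Theta_middle_le[OF h x_nonneg, of "p * C" C] S by simp
    then have "real C * (\<Sum>i = 2..n - 1. ?y i) \<le> 2 * real h * (x 1 + (real C + 1) * (?M + x n))"
      using p x_middle x1 xn M h by (intro middle_cone_step_arith) auto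
    then show ?thesis
      using h yn S by simp
  qed
  ultimately show ?thesis
    unfolding middle_cone_def by blast
qed

lemma thetaProd_column_middle_cone:
  fixes p :: nat and a c :: "nat \<Rightarrow> nat"
  assumes n: "even n" "2 \<le> n" and p: "2 \<le> p"
    and ca: "\<And>k. k \<ge> 1 \<Longrightarrow> a k = p * c k"
    and cc: "\<And>k. k \<ge> 1 \<Longrightarrow> c (k + 1) = p ^ 2 * c k"
    and "j \<le> m"
  shows "middle_cone n (real (c (Suc j))) (\<lambda>i. thetaProd n a c j m i 1)"
  using \<open>j \<le> m\<close>
proof (induction j rule: inc_induct)
  case base
  have "(\<Sum>i = 2..n - 1. thetaProd n a c m m i 1) = 0"
    by (simp add: thetaProd_trivial idmat_def)
  then show ?case
    using n by (simp add: middle_cone_def thetaProd_trivial idmat_def)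
next
  case (step j)
  let ?C = "c (Suc j)"
  have "middle_cone n (real p ^ 2 * real ?C) (\<lambda>l. thetaProd n a c (Suc j) m l 1)"
    using step.IH cc[of "Suc j"] by simp
  then have "middle_cone n (real ?C) (mat_vec n (Theta n (p * ?C) ?C) (\<lambda>l. thetaProd n a c (Suc j) m l 1))"
    by (rule middle_cone_Theta[OF n p])
  moreover have "thetaProd n a c j m i 1 = mat_vec n (Theta n (p * ?C) ?C) (\<lambda>l. thetaProd n a c (Suc j) m l 1) i"
    if "i \<in> {1..n}" for i
    using thetaProd_Suc_left[OF step.hyps(2) that, of 1] n ca[of "Suc j"]
    by (simp add: matmul_def mat_vec_def)
  ultimately show ?case
    using n by (subst middle_cone_cong) auto
qed

lemma middle_cone_middle_share_le:
  assumes x: "middle_cone n K x" and K: "0 < K" and n: "2 \<le> n"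
  shows "0 < (\<Sum>i = 1..n. x i)"
    and "(\<Sum>i = 2..n - 1. x i) / (\<Sum>i = 1..n. x i) \<le> real (n - 2) / K"
proof -
  let ?M = "\<Sum>i = 2..n - 1. x i"
  have total: "(\<Sum>i = 1..n. x i) = x 1 + ?M + x n"
    using n sum_split_first[of n x] sum_split_last[of n x] by simp
  have "0 \<le> x 1" "0 \<le> x n" "0 \<le> ?M" "0 < x 1 + x n" "K * ?M \<le> real (n - 2) * x n"
    using x n by (auto simp: middle_cone_def intro!: sum_nonneg)
  then show pos: "0 < (\<Sum>i = 1..n. x i)"
    using total by linarith
  have "real (n - 2) * x n \<le> real (n - 2) * (\<Sum>i = 1..n. x i)"
    using total \<open>0 \<le> x 1\<close> \<open>0 \<le> ?M\<close> by (intro mult_left_mono) auto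
  with \<open>K * ?M \<le> real (n - 2) * x n\<close> show "?M / (\<Sum>i = 1..n. x i) \<le> real (n - 2) / K"
    using pos K by (simp add: divide_simps mult.commute)
qed

lemma middle_cone_limit:
  fixes v :: "nat \<Rightarrow> nat \<Rightarrow> real"
  assumes n: "2 \<le> n" and K: "0 < K"
    and cone: "eventually (\<lambda>m. middle_cone n K (v m)) sequentially"
    and lim: "\<And>i. i \<in> {1..n} \<Longrightarrow> (\<lambda>m. v m i / (\<Sum>k = 1..n. v m k)) \<longlonglongrightarrow> L i"
  shows "(\<Sum>i = 1..n. L i) = 1" and "(\<Sum>i = 2..n - 1. L i) \<le> real (n - 2) / K"
proof -
  have "(\<lambda>m. \<Sum>i = 1..n. v m i / (\<Sum>k = 1..n. v m k)) \<longlonglongrightarrow> (\<Sum>i = 1..n. L i)"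
    using lim by (intro tendsto_sum) auto
  moreover have "eventually (\<lambda>m. 0 < (\<Sum>k = 1..n. v m k)) sequentially"
    using cone by eventually_elim (rule middle_cone_middle_share_le(1)[OF _ K n])
  then have "eventually (\<lambda>m. (\<Sum>i = 1..n. v m i / (\<Sum>k = 1..n. v m k)) = 1) sequentially"
    by eventually_elim (simp add: sum_divide_distrib[symmetric])
  ultimately have "(\<lambda>m. 1) \<longlonglongrightarrow> (\<Sum>i = 1..n. L i)"
    by (rule Lim_transform_eventually)
  then show "(\<Sum>i = 1..n. L i) = 1"
    by (simp add: LIMSEQ_const_iff)
  have "eventually (\<lambda>m. (\<Sum>i = 2..n - 1. v m i) / (\<Sum>k = 1..n. v m k) \<le> real (n - 2) / K) sequentially"
    using cone by eventually_elim (rule middle_cone_middle_share_le(2)[OF _ K n])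
  then have "eventually (\<lambda>m. (\<Sum>i = 2..n - 1. v m i / (\<Sum>k = 1..n. v m k)) \<le> real (n - 2) / K) sequentially"
    by (simp add: sum_divide_distrib)
  moreover have "(\<lambda>m. \<Sum>i = 2..n - 1. v m i / (\<Sum>k = 1..n. v m k)) \<longlonglongrightarrow> (\<Sum>i = 2..n - 1. L i)"
    using lim by (intro tendsto_sum) auto
  ultimately show "(\<Sum>i = 2..n - 1. L i) \<le> real (n - 2) / K"
    by (intro tendsto_upperbound) auto
qed

lemma measure_UN_proportional:
  assumes "finite_measure M" "finite S" "F ` S \<subseteq> sets M" "disjoint_family_on F S"
    and "\<And>i. i \<in> S \<Longrightarrow> measure M (F i) = t * w i"
  shows "measure M (\<Union>i\<in>S. F i) = t * (\<Sum>i\<in>S. w i)"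
  using finite_measure.finite_measure_finite_Union[OF assms(1-4)] assms(5)
  by (simp add: sum_distrib_left)

lemma normProdE1_limit_shares:
  fixes p :: nat and a c :: "nat \<Rightarrow> nat"
  assumes n: "even n" "2 \<le> n" and p: "2 \<le> p"
    and ca: "\<And>k. k \<ge> 1 \<Longrightarrow> a k = p * c k"
    and cc: "\<And>k. k \<ge> 1 \<Longrightarrow> c (k + 1) = p ^ 2 * c k"
    and c: "0 < c (Suc j)"
    and lim: "\<And>i. i \<in> {1..n} \<Longrightarrow> (\<lambda>m. normProdE1 n a c j m i) \<longlonglongrightarrow> L i"
  shows "(\<Sum>i = 1..n. L i) = 1" and "(\<Sum>i = 2..n - 1. L i) \<le> real (n - 2) / real (c (Suc j))"
proof -
  have "eventually (\<lambda>m. middle_cone n (real (c (Suc j))) (\<lambda>i. thetaProd n a c j m i 1)) sequentially"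
    using eventually_ge_at_top[of j]
    by eventually_elim (rule thetaProd_column_middle_cone[where a = a and c = c, OF n p ca cc])
  from middle_cone_limit[OF n(2) _ this lim[unfolded normProdE1_def]] c
  show "(\<Sum>i = 1..n. L i) = 1" and "(\<Sum>i = 2..n - 1. L i) \<le> real (n - 2) / real (c (Suc j))"
    by simp_all
qed

lemma measure_UN_share:
  assumes "finite_measure M" "finite A" "F ` A \<subseteq> sets M" "disjoint_family_on F A"
    and "0 < t" "\<And>i. i \<in> A \<Longrightarrow> measure M (F i) = t * w i" "(\<Sum>i\<in>A. w i) = 1"
    and "S \<subseteq> A"
  shows "measure M (\<Union>i\<in>S. F i) / measure M (\<Union>i\<in>A. F i) = (\<Sum>i\<in>S. w i)"
proof -
  have "measure M (\<Union>i\<in>T. F i) = t * (\<Sum>i\<in>T. w i)" if "T \<subseteq> A" for T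
    using assms that disjoint_family_on_mono[OF that assms(4)] finite_subset[OF that]
    by (intro measure_UN_proportional) auto
  from this[OF \<open>S \<subseteq> A\<close>] this[of A] show ?thesis
    using assms by simp
qed

lemma geometric_pos:
  fixes c :: "nat \<Rightarrow> nat"
  assumes "0 < c 1" "0 < q" "\<And>k. k \<ge> 1 \<Longrightarrow> c (k + 1) = q * c k" "1 \<le> k"
  shows "0 < c k"
  using \<open>1 \<le> k\<close>
proof (induction k rule: dec_induct)
  case base
  then show ?case using assms(1) .
next
  case (step k)
  then show ?case using assms(2) assms(3)[of k] by simp
qed

lemma middle_share_bound_lt:
  fixes n p c :: nat
  assumes "4 \<le> n" "n + 1 \<le> p" "1 \<le> c"
  shows "real (n - 2) / (real p ^ 2 * real c) < 1 / 2"
    and "real (n - 2) / (real p ^ 2 * real c) < real n / real c"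
proof -
  have pos: "0 < real p ^ 2 * real c"
    using assms by simp
  have "2 * real (n - 2) < (real n + 1) ^ 2"
    using assms(1) by (simp add: power2_eq_square of_nat_diff algebra_simps add_pos_nonneg)
  also have "\<dots> \<le> real p ^ 2"
    using assms by (intro power_mono) auto
  also have "\<dots> \<le> real p ^ 2 * real c"
    using assms by simp
  finally show "real (n - 2) / (real p ^ 2 * real c) < 1 / 2"
    using pos by (simp add: divide_simps)
  have "real (n - 2) < real n * 1"
    using assms by simp
  also have "\<dots> \<le> real n * real p ^ 2"
    using assms by (intro mult_left_mono) (auto simp: one_le_power)
  finally show "real (n - 2) / (real p ^ 2 * real c) < real n / real c"
    using pos assms by (simp add: divide_simps mult.commute)
qed

theorem mainTheorem5:
  fixes n p :: nat and a c :: "nat \<Rightarrow> nat"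
    and lam1 :: "real measure"
    and I :: "nat \<Rightarrow> real set" and Isub :: "nat \<Rightarrow> nat \<Rightarrow> real set"
    and L :: "nat \<Rightarrow> nat \<Rightarrow> real"
  assumes n4: "n \<ge> 4" and neven: "even n"
    and p: "p \<ge> n + 1"
    and c1: "c 1 > 0"
    and ca: "\<And>k. k \<ge> 1 \<Longrightarrow> a k = p * c k"
    and cc: "\<And>k. k \<ge> 1 \<Longrightarrow> c (k + 1) = p ^ 2 * c k"
    and prob: "prob_space lam1"
    and borel: "sets lam1 = sets borel"
    and Isub_meas: "\<And>j i. i \<in> {1..n} \<Longrightarrow> Isub j i \<in> sets lam1"
    and Isub_disj: "\<And>j. disjoint_family_on (Isub j) {1..n}"
    and I_union: "\<And>j. I j = (\<Union>i\<in>{1..n}. Isub j i)"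
    and L_lim: "\<And>j i. i \<in> {1..n} \<Longrightarrow> (\<lambda>m. normProdE1 n a c j m i) \<longlonglongrightarrow> L j i"
    and lam1_L: "\<And>j. \<exists>t>0. \<forall>i\<in>{1..n}. measure lam1 (Isub j i) = t * L j i"
  shows "\<forall>j\<ge>1.
           measure lam1 (Isub j 1 \<union> Isub j n) / measure lam1 (I j) > 1 / 2 \<and>
           measure lam1 (\<Union>i\<in>{2..n-1}. Isub j i) / measure lam1 (I j) < real n / real (c j)"
proof (intro allI impI)
  fix j :: nat
  assume "1 \<le> j"
  have n: "even n" "2 \<le> n" and p2: "2 \<le> p"
    using n4 neven p by auto
  have cj: "1 \<le> c j" and cSj: "c (Suc j) = p ^ 2 * c j"
    using geometric_pos[where q = "p ^ 2", OF c1 _ cc \<open>1 \<le> j\<close>] p2 cc[OF \<open>1 \<le> j\<close>] by auto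
  then have "0 < c (Suc j)"
    using p2 by simp
  note shares = normProdE1_limit_shares[OF n p2 ca cc this L_lim]
  obtain t where t: "t > 0" "\<forall>i\<in>{1..n}. measure lam1 (Isub j i) = t * L j i"
    using lam1_L by blast
  have share: "measure lam1 (\<Union>i\<in>S. Isub j i) / measure lam1 (I j) = (\<Sum>i\<in>S. L j i)"
    if "S \<subseteq> {1..n}" for S
    unfolding I_union using prob_space.finite_measure[OF prob] Isub_meas Isub_disj t shares(1) that
    by (intro measure_UN_share) auto
  have "Isub j 1 \<union> Isub j n = (\<Union>i\<in>{1, n}. Isub j i)"
    by auto
  moreover have "(\<Sum>i\<in>{1, n}. L j i) = 1 - (\<Sum>i = 2..n - 1. L j i)"
    using shares(1) n(2) sum_split_first[of n "L j"] sum_split_last[of n "L j"] by simp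
  moreover have "(\<Sum>i = 2..n - 1. L j i) < 1 / 2" "(\<Sum>i = 2..n - 1. L j i) < real n / real (c j)"
    using middle_share_bound_lt[OF n4 p cj] shares(2)[unfolded cSj of_nat_mult of_nat_power] by linarith+
  ultimately show "measure lam1 (Isub j 1 \<union> Isub j n) / measure lam1 (I j) > 1 / 2 \<and>
      measure lam1 (\<Union>i\<in>{2..n-1}. Isub j i) / measure lam1 (I j) < real n / real (c j)"
    using share[of "{1, n}"] share[of "{2..n - 1}"] n(2) by simp
qed

end
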